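(* Let $u, v \in \mathcal{L}_s$, where $u$ is either $A(E, x, S)$ or $B(E, S)$ and $v$ is either $A(F, y, K)$ or $B(F, K)$. Let $u'$ be $A(E \cup F, x, S)$ if $u = A(E,x,S)$ and $B(E\cup F, S)$ if $u = B(E,S)$. Then $\operatorname{imax}(u, v) =_{\mathcal{L}} \max(u', v)$.
   Context: $\operatorname{imax}\colon \mathbb{N}\times\mathbb{N}\to\mathbb{N}$ is defined by $\operatorname{imax}(i,0)=0$ and $\operatorname{imax}(i,j+1)=\max(i,j+1)$. $\mathcal{X}$ is a countable set of variables; a valuation is $\sigma\colon\mathcal{X}\to\mathbb{N}$. For finite $E\subseteq\mathcal{X}$, $x\in\mathcal{X}$, $S\in\mathbb{N}$, the sublevels $A(E,x,S)$ and $B(E,S)$ have values $[A(E,x,S)]_\sigma = 0$ if some $z\in E$ has $\sigma(z)=0$, and $\sigma(x)+S$ otherwise; $[B(E,S)]_\sigma=0$ if some $z\in E$ has $\sigma(z)=0$, and $S$ otherwise. $\mathcal{L}_s$ is the set of sublevels $A(E,x,S)$ with $x\in E$ and $B(E,S)$ with $S>0$. Values of $\max$ and $\operatorname{imax}$ of such expressions are computed pointwise: $[\max(a,b)]_\sigma=\max([a]_\sigma,[b]_\sigma)$, $[\operatorname{imax}(a,b)]_\sigma=\operatorname{imax}([a]_\sigma,[b]_\sigma)$. $t_1 =_{\mathcal{L}} t_2$ means $[t_1]_\sigma=[t_2]_\sigma$ for every valuation $\sigma$. *)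

theory Defs
  imports Main "HOL-Library.Countable"
begin

fun imax :: "nat \<Rightarrow> nat \<Rightarrow> nat" where
  "imax i 0 = 0"
| "imax i (Suc j) = max i (Suc j)"

datatype 'x sublevel = SA "'x set" 'x nat | SB "'x set" nat

fun sval :: "('x \<Rightarrow> nat) \<Rightarrow> 'x sublevel \<Rightarrow> nat" where
  "sval \<sigma> (SA E x S) = (if \<exists>z\<in>E. \<sigma> z = 0 then 0 else \<sigma> x + S)"
| "sval \<sigma> (SB E S) = (if \<exists>z\<in>E. \<sigma> z = 0 then 0 else S)"

fun in_Ls :: "'x sublevel \<Rightarrow> bool" where
  "in_Ls (SA E x S) = (finite E \<and> x \<in> E)"
| "in_Ls (SB E S) = (finite E \<and> S > 0)"

fun guard_set :: "'x sublevel \<Rightarrow> 'x set" where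
  "guard_set (SA E x S) = E"
| "guard_set (SB E S) = E"

fun extend_guard :: "'x sublevel \<Rightarrow> 'x set \<Rightarrow> 'x sublevel" where
  "extend_guard (SA E x S) F = SA (E \<union> F) x S"
| "extend_guard (SB E S) F = SB (E \<union> F) S"

end

theory Submission
  imports Defs
begin

text \<open>If some guard variable of \<open>v\<close> vanishes, both sides are \<open>0\<close>, because \<open>u'\<close> carries
  the guards of \<open>v\<close>. Otherwise \<open>v\<close> is positive (here \<open>v \<in> L\<^sub>s\<close> is used), so \<open>imax\<close> is
  \<open>max\<close>, and \<open>u'\<close> has the same value as \<open>u\<close>.\<close>

lemma imax_eq_if: "imax i j = (if j = 0 then 0 else max i j)"
  by (cases j) auto

lemma sval_eq_0_iff_guard:
  assumes "in_Ls v"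
  shows "sval \<sigma> v = 0 \<longleftrightarrow> (\<exists>z\<in>guard_set v. \<sigma> z = 0)"
  using assms by (cases v) auto

lemma sval_extend_guard:
  "sval \<sigma> (extend_guard u F) = (if \<exists>z\<in>F. \<sigma> z = 0 then 0 else sval \<sigma> u)"
  by (cases u) (auto simp: bex_Un)

theorem proposition55:
  fixes u v :: "'x::countable sublevel"
  assumes "in_Ls u" and "in_Ls v"
  shows "\<forall>\<sigma> :: 'x \<Rightarrow> nat.
           imax (sval \<sigma> u) (sval \<sigma> v)
           = max (sval \<sigma> (extend_guard u (guard_set v))) (sval \<sigma> v)"
proof
  fix \<sigma> :: "'x \<Rightarrow> nat"
  show "imax (sval \<sigma> u) (sval \<sigma> v)
        = max (sval \<sigma> (extend_guard u (guard_set v))) (sval \<sigma> v)"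
  proof (cases "sval \<sigma> v = 0")
    case True
    then have "\<exists>z\<in>guard_set v. \<sigma> z = 0"
      using sval_eq_0_iff_guard[OF \<open>in_Ls v\<close>] by simp
    then have "sval \<sigma> (extend_guard u (guard_set v)) = 0"
      by (simp only: sval_extend_guard if_True)
    with True show ?thesis
      by (simp add: imax_eq_if)
  next
    case False
    then have "\<not> (\<exists>z\<in>guard_set v. \<sigma> z = 0)"
      using sval_eq_0_iff_guard[OF \<open>in_Ls v\<close>] by simp
    then have "sval \<sigma> (extend_guard u (guard_set v)) = sval \<sigma> u"
      by (simp only: sval_extend_guard if_False)
    with False show ?thesis
      by (simp add: imax_eq_if)
  qed
qed

end
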